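(* Let $\beta\in(1,2)$, $\beta_1,\dots,\beta_d$, $\mathbb{K}$, $T_0,T_{-1}$, $I^+$, the self-affine measure $\nu_{\underline{\beta}}$ and the operator $P$ be as in the context. Suppose that $P$ has a fixed point $f$ (i.e. $Pf=f$) which has positive finite integral over $\mathbb{K}$. Then $\nu_{\underline{\beta}}$ is absolutely continuous with respect to Lebesgue measure on $\mathbb{K}$, and the fixed point of $P$ of integral one is the density of $\nu_{\underline{\beta}}$.
   Context: Let $\beta\in(1,2)$ be an algebraic integer none of whose Galois conjugates has modulus $1$. List all its Galois conjugates as $\beta=\beta_1,\dots,\beta_d,\beta_{d+1},\dots,\beta_{d+s},\beta_{d+s+1}$, where $|\beta_1|,\dots,|\beta_d|>1$, $|\beta_{d+1}|,\dots,|\beta_{d+s}|<1$, and $\beta_{d+s+1}$ is real with $|\beta_{d+s+1}|>1$. For $z\in\mathbb{C}$ let $\mathbb{F}_z=\mathbb{R}$ if $z\in\mathbb{R}$ and $\mathbb{F}_z=\mathbb{C}$ otherwise, and let $\mathbb{K}=\prod_{j=1}^d\mathbb{F}_{\beta_j}$, equipped with Lebesgue measure (identifying $\mathbb{C}$ with $\mathbb{R}^2$). For $i\in\mathbb{Z}$ define $T_i:\mathbb{K}\to\mathbb{K}$ by $T_i(x_1,\dots,x_d)=(\beta_1x_1+i,\dots,\beta_dx_d+i)$. For $j\le d$ let $I^+_{\beta_j}=[0,\frac{1}{\beta_j-1}]$ if $\beta_j>1$, $I^+_{\beta_j}=\{x\in\mathbb{R}:|x|\le\frac{1}{|\beta_j|-1}\}$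 if $\beta_j<-1$, and $I^+_{\beta_j}=\{z\in\mathbb{C}:|z|\le\frac{1}{|\beta_j|-1}\}$ if $\beta_j\notin\mathbb{R}$; set $I^+=I^+_{\beta_1}\times\cdots\times I^+_{\beta_d}$. The self-affine measure $\nu_{\underline{\beta}}$ is the unique Borel probability measure on $\mathbb{K}$ satisfying $\nu_{\underline{\beta}}(A)=\frac12\big(\nu_{\underline{\beta}}(T_0(A))+\nu_{\underline{\beta}}(T_{-1}(A))\big)$ for all Borel $A$ (the self-affine measure of the contractions $T_0^{-1},T_{-1}^{-1}$; it is supported in $I^+$). The operator $P$ acts on functions $f:\mathbb{K}\to\mathbb{R}$ by $Pf=\frac{|\beta_1\cdots\beta_d|}{2}\left(f\circ T_0+f\circ T_{-1}\right)$; it is linear. *)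

theory Defs
  imports "HOL-Probability.Probability" "HOL-Computational_Algebra.Computational_Algebra"
begin

text \<open>Coordinates of the space K are indexed by a finite type 'd (one index per
  conjugate beta_j, j = 1..d).\<close>

definition Kset :: "('d \<Rightarrow> complex) \<Rightarrow> ('d \<Rightarrow> complex) set" where
  "Kset bs = {x. \<forall>j. bs j \<in> \<real> \<longrightarrow> x j \<in> \<real>}"

definition lebK :: "('d::finite \<Rightarrow> complex) \<Rightarrow> ('d \<Rightarrow> complex) measure" where
  "lebK bs = PiM UNIV (\<lambda>j. if bs j \<in> \<real> then distr lborel borel complex_of_real else lborel)"

definition Tmap :: "('d \<Rightarrow> complex) \<Rightarrow> int \<Rightarrow> ('d \<Rightarrow> complex) \<Rightarrow> ('d \<Rightarrow> complex)" where
  "Tmap bs i x = (\<lambda>j. bs j * x j + of_int i)"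

definition Pop :: "('d::finite \<Rightarrow> complex) \<Rightarrow> (('d \<Rightarrow> complex) \<Rightarrow> real) \<Rightarrow> ('d \<Rightarrow> complex) \<Rightarrow> real" where
  "Pop bs f x = norm (\<Prod>j\<in>UNIV. bs j) / 2 * (f (Tmap bs 0 x) + f (Tmap bs (-1) x))"

end

theory Submission
  imports Defs
begin

text \<open>Let \<open>Q g = (g \<circ> T\<^sub>0\<inverse> + g \<circ> T\<^sub>-\<^sub>1\<inverse>) / 2\<close> be the averaging operator dual to \<open>P\<close>.
  Each \<open>T\<^sub>i\<close> scales Lebesgue measure on \<open>\<bbbK>\<close> by a constant factor, and integrating \<open>Pf = f\<close>
  shows that this factor is \<open>|\<beta>\<^sub>1\<cdots>\<beta>\<^sub>d|\<close>; hence \<open>g \<mapsto> \<integral> g h\<close> with \<open>h = f / \<integral> f\<close> is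
  \<open>Q\<close>-invariant, and self-affinity says the same of \<open>g \<mapsto> \<integral> g d\<nu>\<close>. Since the maps \<open>T\<^sub>i\<inverse>\<close>
  contract, the iterates \<open>Q\<^sup>n g\<close> of a bounded Lipschitz function converge to a constant,
  which both normalised invariant functionals must assign to \<open>g\<close>. So \<open>\<integral> g h = \<integral> g d\<nu>\<close> for
  bounded Lipschitz \<open>g\<close>; approximating indicators of open boxes and a Dynkin argument
  extend this to all Borel sets, which gives \<open>h \<ge> 0\<close> almost everywhere and \<open>\<nu> = h \<cdot> Leb\<close>.\<close>


section \<open>Measures scaled by a map\<close>

text \<open>Stated with preimages so that \<open>T\<close> need not be invertible; for a bijection \<open>T\<close> it says
  \<open>M (T ` B) = c * M B\<close>.\<close>

definition scales_measure :: "'a measure \<Rightarrow> ('a \<Rightarrow> 'a) \<Rightarrow> real \<Rightarrow> bool" where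
  "scales_measure M T c \<longleftrightarrow> T \<in> M \<rightarrow>\<^sub>M M \<and>
     (\<forall>A\<in>sets M. ennreal c * emeasure M (T -` A \<inter> space M) = emeasure M A)"

lemma scales_measureD:
  "scales_measure M T c \<Longrightarrow> A \<in> sets M \<Longrightarrow> ennreal c * emeasure M (T -` A \<inter> space M) = emeasure M A"
  by (simp add: scales_measure_def)

lemma scales_measure_measurable: "scales_measure M T c \<Longrightarrow> T \<in> M \<rightarrow>\<^sub>M M"
  by (simp add: scales_measure_def)

lemma emeasure_density_distr_const:
  assumes "T \<in> M \<rightarrow>\<^sub>M M" and "A \<in> sets M"
  shows "emeasure (density (distr M M T) (\<lambda>_. ennreal c)) A = ennreal c * emeasure M (T -` A \<inter> space M)"
  using assms by (simp add: emeasure_density nn_integral_cmult_indicator emeasure_distr)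

lemma scales_measure_iff_density:
  assumes "T \<in> M \<rightarrow>\<^sub>M M"
  shows "scales_measure M T c \<longleftrightarrow> density (distr M M T) (\<lambda>_. ennreal c) = M"
proof
  assume "scales_measure M T c"
  then show "density (distr M M T) (\<lambda>_. ennreal c) = M"
    using assms by (intro measure_eqI) (simp_all add: emeasure_density_distr_const scales_measureD)
next
  assume D: "density (distr M M T) (\<lambda>_. ennreal c) = M"
  show "scales_measure M T c"
    unfolding scales_measure_def
  proof (intro conjI ballI assms)
    fix A assume "A \<in> sets M"
    then show "ennreal c * emeasure M (T -` A \<inter> space M) = emeasure M A"
      using emeasure_density_distr_const[OF assms, of A c] by (simp only: D)
  qed
qed

lemma scales_measure_comp:
  assumes T: "scales_measure M T c" and S: "scales_measure M S d" and "0 \<le> c" "0 \<le> d"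
  shows "scales_measure M (T \<circ> S) (c * d)"
  unfolding scales_measure_def
proof (intro conjI ballI)
  have Tm: "T \<in> M \<rightarrow>\<^sub>M M" and Sm: "S \<in> M \<rightarrow>\<^sub>M M"
    using T S by (simp_all add: scales_measure_def)
  then show "T \<circ> S \<in> M \<rightarrow>\<^sub>M M" by (rule measurable_comp[rotated])
  fix A assume A: "A \<in> sets M"
  have TA: "T -` A \<inter> space M \<in> sets M" using measurable_sets[OF Tm A] .
  have "(T \<circ> S) -` A \<inter> space M = S -` (T -` A \<inter> space M) \<inter> space M"
    using measurable_space[OF Sm] by auto
  then have "ennreal (c * d) * emeasure M ((T \<circ> S) -` A \<inter> space M)
      = ennreal c * (ennreal d * emeasure M (S -` (T -` A \<inter> space M) \<inter> space M))"
    using assms(3,4) by (simp add: ennreal_mult mult.assoc)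
  also have "\<dots> = emeasure M A"
    using scales_measureD[OF S TA] scales_measureD[OF T A] by simp
  finally show "ennreal (c * d) * emeasure M ((T \<circ> S) -` A \<inter> space M) = emeasure M A" .
qed

lemma scales_measure_distr:
  assumes T: "scales_measure M T c" and \<phi>: "\<phi> \<in> M \<rightarrow>\<^sub>M N" and N: "distr M N \<phi> = N"
    and T': "T' \<in> N \<rightarrow>\<^sub>M N" and conj: "\<And>x. x \<in> space M \<Longrightarrow> T' (\<phi> x) = \<phi> (T x)"
  shows "scales_measure N T' c"
  unfolding scales_measure_def
proof (intro conjI ballI T')
  fix A assume A: "A \<in> sets N"
  have A': "T' -` A \<inter> space N \<in> sets N" using measurable_sets[OF T' A] .
  have \<phi>A: "\<phi> -` A \<inter> space M \<in> sets M" using measurable_sets[OF \<phi> A] .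
  have pre: "\<phi> -` (T' -` A \<inter> space N) \<inter> space M = T -` (\<phi> -` A \<inter> space M) \<inter> space M"
    using conj measurable_space[OF \<phi>] measurable_space[OF scales_measure_measurable[OF T]] by auto
  have "ennreal c * emeasure N (T' -` A \<inter> space N)
      = ennreal c * emeasure (distr M N \<phi>) (T' -` A \<inter> space N)"
    by (simp add: N)
  also have "\<dots> = ennreal c * emeasure M (T -` (\<phi> -` A \<inter> space M) \<inter> space M)"
    using A' by (simp only: emeasure_distr[OF \<phi>] pre)
  also have "\<dots> = emeasure (distr M N \<phi>) A"
    using A by (simp only: emeasure_distr[OF \<phi>] scales_measureD[OF T \<phi>A])
  finally show "ennreal c * emeasure N (T' -` A \<inter> space N) = emeasure N A"
    by (simp add: N)
qed

lemma scales_PiM: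
  fixes M :: "'i::finite \<Rightarrow> 'a measure"
  assumes sf: "\<And>j. sigma_finite_measure (M j)"
    and T: "\<And>j. scales_measure (M j) (T j) (c j)" and c: "\<And>j. 0 \<le> c j"
  shows "scales_measure (PiM UNIV M) (\<lambda>x j. T j (x j)) (\<Prod>j\<in>UNIV. c j)"
proof -
  interpret product_sigma_finite M by (simp add: product_sigma_finite_def sf)
  let ?T = "\<lambda>x j. T j (x j)" and ?C = "\<Prod>j\<in>UNIV. c j"
  have Tj: "T j \<in> M j \<rightarrow>\<^sub>M M j" for j
    using T by (rule scales_measure_measurable)
  have Tm: "?T \<in> PiM UNIV M \<rightarrow>\<^sub>M PiM UNIV M"
  proof (rule measurable_PiM_single')
    show "(\<lambda>x. T j (x j)) \<in> PiM UNIV M \<rightarrow>\<^sub>M M j" for j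
      by (rule measurable_compose[OF measurable_component_singleton[of j UNIV M] Tj[of j]]) simp
  qed (auto simp: space_PiM intro: measurable_space[OF Tj])
  have "density (distr (PiM UNIV M) (PiM UNIV M) ?T) (\<lambda>_. ennreal ?C) = PiM UNIV M"
  proof (rule PiM_eqI)
    fix B assume B: "\<And>j. j \<in> UNIV \<Longrightarrow> B j \<in> sets (M j)"
    have pre: "?T -` PiE UNIV B \<inter> space (PiM UNIV M) = PiE UNIV (\<lambda>j. T j -` B j \<inter> space (M j))"
      by (auto simp: space_PiM PiE_iff)
    have TB: "T j -` B j \<inter> space (M j) \<in> sets (M j)" for j
      using measurable_sets[OF Tj B] by simp
    have "emeasure (density (distr (PiM UNIV M) (PiM UNIV M) ?T) (\<lambda>_. ennreal ?C)) (PiE UNIV B)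
        = ennreal ?C * (\<Prod>j\<in>UNIV. emeasure (M j) (T j -` B j \<inter> space (M j)))"
      using B TB by (simp add: emeasure_density_distr_const[OF Tm] sets_PiM_I_finite pre emeasure_PiM)
    also have "\<dots> = (\<Prod>j\<in>UNIV. ennreal (c j) * emeasure (M j) (T j -` B j \<inter> space (M j)))"
      using c by (simp add: prod.distrib prod_ennreal)
    also have "\<dots> = (\<Prod>j\<in>UNIV. emeasure (M j) (B j))"
      using B by (simp add: scales_measureD[OF T])
    finally show "emeasure (density (distr (PiM UNIV M) (PiM UNIV M) ?T) (\<lambda>_. ennreal ?C)) (PiE UNIV B)
        = (\<Prod>j\<in>UNIV. emeasure (M j) (B j))" .
  qed simp_all
  then show ?thesis by (simp add: scales_measure_iff_density[OF Tm])
qed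

lemma scales_measure_integral:
  fixes F :: "'a \<Rightarrow> real"
  assumes T: "scales_measure M T c" and c: "0 < c" and F: "integrable M F"
  shows "integrable M (\<lambda>x. F (T x))" and "integral\<^sup>L M F = c * integral\<^sup>L M (\<lambda>x. F (T x))"
proof -
  have Tm [measurable]: "T \<in> M \<rightarrow>\<^sub>M M" using T by (rule scales_measure_measurable)
  have Fm [measurable]: "F \<in> borel_measurable M" using F by (rule borel_measurable_integrable)
  have M: "density (distr M M T) (\<lambda>_. ennreal c) = M"
    using T by (simp add: scales_measure_iff_density)
  have "integrable (density (distr M M T) (\<lambda>_. ennreal c)) F" using F by (simp add: M)
  then have "integrable M (\<lambda>x. c * F (T x))"
    using c by (simp add: integrable_density integrable_distr_eq)
  then show "integrable M (\<lambda>x. F (T x))"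
    using c by simp
  have "integral\<^sup>L M F = integral\<^sup>L (density (distr M M T) (\<lambda>_. ennreal c)) F" by (simp add: M)
  also have "\<dots> = integral\<^sup>L M (\<lambda>x. c * F (T x))"
    using c by (simp add: integral_density integral_distr)
  finally show "integral\<^sup>L M F = c * integral\<^sup>L M (\<lambda>x. F (T x))" by simp
qed

section \<open>Lebesgue measure on \<open>\<bbbK>\<close>\<close>

lemma scales_lborel_real_affine:
  fixes r t :: real
  assumes "r \<noteq> 0"
  shows "scales_measure lborel (\<lambda>x. t + r * x) \<bar>r\<bar>"
  unfolding scales_measure_def
proof (intro conjI ballI)
  show "(\<lambda>x. t + r * x) \<in> lborel \<rightarrow>\<^sub>M lborel" by simp
  fix A :: "real set" assume A: "A \<in> sets lborel"
  have "emeasure lborel A = emeasure (density (distr lborel borel (\<lambda>x. t + r * x)) (\<lambda>_. ennreal \<bar>r\<bar>)) A"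
    using lborel_real_affine[OF assms, of t] by simp
  also have "\<dots> = ennreal \<bar>r\<bar> * emeasure lborel ((\<lambda>x. t + r * x) -` A)"
    using A by (simp add: emeasure_density nn_integral_cmult_indicator emeasure_distr)
  finally show "ennreal \<bar>r\<bar> * emeasure lborel ((\<lambda>x. t + r * x) -` A \<inter> space lborel) = emeasure lborel A"
    by simp
qed

lemma scales_lborel_pair_shear:
  fixes s a u :: real
  assumes s: "s \<noteq> 0"
  shows "scales_measure (lborel \<Otimes>\<^sub>M lborel) (\<lambda>(x, y). (x, s * y + a * x + u)) \<bar>s\<bar>"
  unfolding scales_measure_def
proof (intro conjI ballI)
  let ?G = "\<lambda>(x, y). (x, s * y + a * x + u)"
  show Gm: "?G \<in> lborel \<Otimes>\<^sub>M lborel \<rightarrow>\<^sub>M lborel \<Otimes>\<^sub>M lborel" by measurable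
  fix S :: "(real \<times> real) set" assume S: "S \<in> sets (lborel \<Otimes>\<^sub>M lborel)"
  have GS: "?G -` S \<in> sets (lborel \<Otimes>\<^sub>M lborel)"
    using measurable_sets[OF Gm S] by (simp add: space_pair_measure)
  have "ennreal \<bar>s\<bar> * emeasure (lborel \<Otimes>\<^sub>M lborel) (?G -` S)
      = ennreal \<bar>s\<bar> * (\<integral>\<^sup>+x. emeasure lborel (Pair x -` (?G -` S)) \<partial>lborel)"
    using GS by (simp add: lborel.emeasure_pair_measure_alt)
  also have "\<dots> = (\<integral>\<^sup>+x. ennreal \<bar>s\<bar> * emeasure lborel (Pair x -` (?G -` S)) \<partial>lborel)"
    by (rule nn_integral_cmult[symmetric]) (rule lborel_pair.measurable_emeasure_Pair1[OF GS])
  also have "\<dots> = (\<integral>\<^sup>+x. emeasure lborel (Pair x -` S) \<partial>lborel)"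
  proof (rule nn_integral_cong)
    fix x :: real
    have "Pair x -` (?G -` S) = (\<lambda>y. (a * x + u) + s * y) -` (Pair x -` S)"
      by (auto simp: algebra_simps)
    then show "ennreal \<bar>s\<bar> * emeasure lborel (Pair x -` (?G -` S)) = emeasure lborel (Pair x -` S)"
      using scales_measureD[OF scales_lborel_real_affine[OF s, of "a * x + u"] sets_Pair1[OF S, of x]]
      by simp
  qed
  also have "\<dots> = emeasure (lborel \<Otimes>\<^sub>M lborel) S"
    using S by (rule lborel.emeasure_pair_measure_alt[symmetric])
  finally show "ennreal \<bar>s\<bar> * emeasure (lborel \<Otimes>\<^sub>M lborel) (?G -` S \<inter> space (lborel \<Otimes>\<^sub>M lborel))
      = emeasure (lborel \<Otimes>\<^sub>M lborel) S"
    by (simp add: space_pair_measure)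
qed

lemma scales_lborel_pair_swap:
  "scales_measure (lborel \<Otimes>\<^sub>M lborel :: (real \<times> real) measure) (\<lambda>(x, y). (y, x)) 1"
  unfolding scales_measure_def
proof (intro conjI ballI measurable_pair_swap')
  fix S :: "(real \<times> real) set" assume S: "S \<in> sets (lborel \<Otimes>\<^sub>M lborel)"
  have "emeasure (lborel \<Otimes>\<^sub>M lborel) S = emeasure (distr (lborel \<Otimes>\<^sub>M lborel) (lborel \<Otimes>\<^sub>M lborel) (\<lambda>(x, y). (y, x))) S"
    by (simp only: lborel_pair.distr_pair_swap[symmetric])
  also have "\<dots> = emeasure (lborel \<Otimes>\<^sub>M lborel) ((\<lambda>(x, y). (y, x)) -` S \<inter> space (lborel \<Otimes>\<^sub>M lborel))"
    by (rule emeasure_distr[OF measurable_pair_swap' S])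
  finally show "ennreal 1 * emeasure (lborel \<Otimes>\<^sub>M lborel) ((\<lambda>(x, y). (y, x)) -` S \<inter> space (lborel \<Otimes>\<^sub>M lborel))
      = emeasure (lborel \<Otimes>\<^sub>M lborel) S"
    by simp
qed

lemma measurable_Complex_pair [measurable]:
  "(\<lambda>(a, b). Complex a b) \<in> borel_measurable (lborel \<Otimes>\<^sub>M lborel)"
proof -
  have "(\<lambda>(a, b). Complex a b) = (\<lambda>p. complex_of_real (fst p) + \<i> * complex_of_real (snd p))"
    by (auto simp: Complex_eq)
  then show ?thesis by simp
qed

lemma distr_Complex_lborel: "distr (lborel \<Otimes>\<^sub>M lborel) borel (\<lambda>(a, b). Complex a b) = lborel"
proof (rule lborel_eqI[symmetric])
  fix l u :: complex
  assume le: "\<And>b. b \<in> Basis \<Longrightarrow> l \<bullet> b \<le> u \<bullet> b"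
  have "(\<lambda>(a, b). Complex a b) -` box l u = {Re l<..<Re u} \<times> {Im l<..<Im u}"
    by (auto simp: box_def Basis_complex_def inner_complex_def)
  moreover have "Re l \<le> Re u" "Im l \<le> Im u"
    using le[of 1] le[of \<i>] by (auto simp: Basis_complex_def inner_complex_def)
  ultimately show "emeasure (distr (lborel \<Otimes>\<^sub>M lborel) borel (\<lambda>(a, b). Complex a b)) (box l u)
      = (\<Prod>b\<in>Basis. (u - l) \<bullet> b)"
    by (simp add: emeasure_distr lborel.emeasure_pair_measure_Times space_pair_measure
        Basis_complex_def inner_complex_def ennreal_mult)
qed simp

text \<open>Multiplication by \<open>\<beta> = p + iq\<close> with \<open>q \<noteq> 0\<close> is, in real coordinates, the composite of
  a vertical shear, the coordinate swap and a second vertical shear.\<close>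

lemma scales_lborel_complex_affine:
  fixes \<beta> t :: complex
  assumes "\<beta> \<notin> \<real>"
  shows "scales_measure lborel (\<lambda>z. \<beta> * z + t) ((cmod \<beta>)\<^sup>2)"
proof -
  define p q where "p = Re \<beta>" and "q = Im \<beta>"
  have q: "q \<noteq> 0" using assms by (auto simp: q_def complex_is_Real_iff)
  define s where "s = (p\<^sup>2 + q\<^sup>2) / q"
  have s: "s \<noteq> 0" using q by (simp add: s_def add_nonneg_pos)
  let ?G1 = "\<lambda>(x, y). (x, (- q) * y + p * x + Re t)"
  let ?W = "\<lambda>(x :: real, y :: real). (y, x)"
  let ?G2 = "\<lambda>(x, y). (x, s * y + (- p / q) * x + (Im t + p * Re t / q))"
  have "scales_measure (lborel \<Otimes>\<^sub>M lborel) (?G2 \<circ> (?W \<circ> ?G1)) (\<bar>s\<bar> * (1 * \<bar>- q\<bar>))"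
    using q s by (intro scales_measure_comp scales_lborel_pair_shear scales_lborel_pair_swap) auto
  moreover have "\<bar>s\<bar> * (1 * \<bar>- q\<bar>) = (cmod \<beta>)\<^sup>2"
    using q by (simp add: s_def p_def q_def cmod_power2 abs_mult)
  ultimately have G: "scales_measure (lborel \<Otimes>\<^sub>M lborel) (?G2 \<circ> (?W \<circ> ?G1)) ((cmod \<beta>)\<^sup>2)"
    by simp
  show ?thesis
  proof (rule scales_measure_distr[OF G])
    show "(\<lambda>(a, b). Complex a b) \<in> lborel \<Otimes>\<^sub>M lborel \<rightarrow>\<^sub>M lborel"
      by simp
    show "distr (lborel \<Otimes>\<^sub>M lborel) lborel (\<lambda>(a, b). Complex a b) = lborel"
      using distr_Complex_lborel by (simp cong: distr_cong)
    fix x :: "real \<times> real"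
    show "\<beta> * (case x of (a, b) \<Rightarrow> Complex a b) + t = (case (?G2 \<circ> (?W \<circ> ?G1)) x of (a, b) \<Rightarrow> Complex a b)"
      using q by (cases x) (simp add: complex_eq_iff s_def p_def q_def field_simps power2_eq_square)
  qed simp
qed

definition coord_measure :: "complex \<Rightarrow> complex measure" where
  "coord_measure \<beta> = (if \<beta> \<in> \<real> then distr lborel borel complex_of_real else lborel)"

definition coord_scale :: "complex \<Rightarrow> real" where
  "coord_scale \<beta> = (if \<beta> \<in> \<real> then cmod \<beta> else (cmod \<beta>)\<^sup>2)"

lemma lebK_eq_PiM: "lebK bs = PiM UNIV (\<lambda>j. coord_measure (bs j))"
  by (simp add: lebK_def coord_measure_def)

lemma sets_coord_measure [simp, measurable_cong]: "sets (coord_measure \<beta>) = sets borel"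
  by (simp add: coord_measure_def)

lemma space_coord_measure [simp]: "space (coord_measure \<beta>) = UNIV"
  by (simp add: coord_measure_def)

lemma space_lebK [simp]: "space (lebK bs) = UNIV"
  by (simp add: lebK_eq_PiM space_PiM)

lemma sets_lebK: "sets (lebK bs) = sets (PiM UNIV (\<lambda>_. borel))"
  unfolding lebK_eq_PiM by (rule sets_PiM_cong) simp_all

lemma sigma_finite_coord_measure: "sigma_finite_measure (coord_measure \<beta>)"
proof (cases "\<beta> \<in> \<real>")
  case True
  have "emeasure (distr lborel borel complex_of_real) (cball 0 (real n)) \<noteq> \<infinity>" for n :: nat
  proof -
    have "complex_of_real -` cball 0 (real n) = {- real n .. real n}" by auto
    then show ?thesis by (simp add: emeasure_distr)
  qed
  moreover have "\<Union> (range (\<lambda>n::nat. cball (0::complex) (real n))) = UNIV"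
    by (auto simp: real_arch_simple)
  ultimately show ?thesis
    using True unfolding coord_measure_def sigma_finite_measure_def
    by (intro exI[of _ "range (\<lambda>n::nat. cball 0 (real n))"]) auto
qed (simp add: coord_measure_def lborel.sigma_finite_measure_axioms)

lemma scales_coord_measure:
  fixes t :: real
  assumes "\<beta> \<noteq> 0"
  shows "scales_measure (coord_measure \<beta>) (\<lambda>z. \<beta> * z + of_real t) (coord_scale \<beta>)"
proof (cases "\<beta> \<in> \<real>")
  case True
  then obtain r where r: "\<beta> = of_real r" by (auto elim: Reals_cases)
  have "scales_measure (distr lborel borel complex_of_real) (\<lambda>z. \<beta> * z + of_real t) \<bar>r\<bar>"
  proof (rule scales_measure_distr[OF scales_lborel_real_affine])
    show "distr lborel (distr lborel borel complex_of_real) complex_of_real = distr lborel borel complex_of_real"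
      by (rule distr_cong) simp_all
  qed (use assms r in \<open>simp_all add: algebra_simps\<close>)
  then show ?thesis using True r by (simp add: coord_measure_def coord_scale_def)
next
  case False
  then show ?thesis using scales_lborel_complex_affine[OF False]
    by (simp add: coord_measure_def coord_scale_def)
qed

lemma scales_lebK:
  assumes "\<And>j. bs j \<noteq> 0"
  shows "scales_measure (lebK bs) (Tmap bs i) (\<Prod>j\<in>UNIV. coord_scale (bs j))"
proof -
  have "scales_measure (PiM UNIV (\<lambda>j. coord_measure (bs j)))
      (\<lambda>x j. bs j * x j + of_real (of_int i)) (\<Prod>j\<in>UNIV. coord_scale (bs j))"
    using assms by (intro scales_PiM sigma_finite_coord_measure scales_coord_measure)
      (auto simp: coord_scale_def)
  then show ?thesis by (simp add: lebK_eq_PiM Tmap_def[abs_def])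
qed

lemma Tmap_measurable [measurable]: "Tmap bs i \<in> lebK bs \<rightarrow>\<^sub>M lebK bs"
  unfolding Tmap_def lebK_eq_PiM
  by (rule measurable_PiM_single'[where f="\<lambda>j x. bs j * x j + of_int i"]) (auto simp: space_PiM)

lemma AE_PiM_finite_component:
  fixes M :: "'i::finite \<Rightarrow> 'a measure"
  assumes "\<And>k. sigma_finite_measure (M k)" and "AE z in M j. P z"
  shows "AE x in PiM UNIV M. P (x j)"
proof -
  interpret product_sigma_finite M by (simp add: product_sigma_finite_def assms(1))
  from assms(2) obtain N where N: "N \<in> null_sets (M j)" "{z \<in> space (M j). \<not> P z} \<subseteq> N"
    unfolding eventually_ae_filter by blast
  let ?N = "PiE UNIV (\<lambda>k. if k = j then N else space (M k))"
  have sets: "(if k = j then N else space (M k)) \<in> sets (M k)" for k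
    using N by auto
  have "emeasure (PiM UNIV M) ?N = (\<Prod>k\<in>UNIV. emeasure (M k) (if k = j then N else space (M k)))"
    using sets by (intro emeasure_PiM) auto
  also have "\<dots> = 0"
    using N by (intro prod_zero) auto
  finally have "?N \<in> null_sets (PiM UNIV M)"
    using sets by (intro null_setsI sets_PiM_I_finite) auto
  moreover have "{x \<in> space (PiM UNIV M). \<not> P (x j)} \<subseteq> ?N"
    using N(2) by (auto simp: space_PiM PiE_iff)
  ultimately show ?thesis by (rule AE_I')
qed

lemma AE_Kset: "AE x in lebK bs. x \<in> Kset bs"
proof -
  have "AE x in lebK bs. bs j \<in> \<real> \<longrightarrow> x j \<in> \<real>" for j
  proof (cases "bs j \<in> \<real>")
    case True
    have "AE z in distr lborel borel complex_of_real. z \<in> \<real>"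
      by (subst AE_distr_iff) (simp_all add: borel_closed closed_complex_Reals)
    then have "AE z in coord_measure (bs j). z \<in> \<real>"
      by (simp only: coord_measure_def True if_True)
    then show ?thesis unfolding lebK_eq_PiM
      by (rule AE_PiM_finite_component[OF sigma_finite_coord_measure, THEN AE_mp]) simp
  qed simp
  then show ?thesis unfolding Kset_def by (simp add: AE_all_countable)
qed

text \<open>Integrating \<open>Pf = f\<close> identifies the scaling factor of \<open>T\<^sub>i\<close> with \<open>|\<beta>\<^sub>1\<cdots>\<beta>\<^sub>d|\<close>.
  The actual factor counts each non-real \<open>\<beta>\<^sub>j\<close> with \<open>|\<beta>\<^sub>j|\<^sup>2\<close>, so when all \<open>|\<beta>\<^sub>j| > 1\<close>
  a fixed point with nonzero integral exists only if every \<open>\<beta>\<^sub>j\<close> is real.\<close>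

lemma scales_lebK_fixed_point:
  assumes nz: "\<And>j. bs j \<noteq> 0" and f: "integrable (lebK bs) f"
    and f_int: "integral\<^sup>L (lebK bs) f \<noteq> 0" and f_fix: "AE x in lebK bs. Pop bs f x = f x"
  shows "scales_measure (lebK bs) (Tmap bs i) (norm (\<Prod>j\<in>UNIV. bs j))"
proof -
  define C where "C = (\<Prod>j\<in>UNIV. coord_scale (bs j))"
  define D where "D = norm (\<Prod>j\<in>UNIV. bs j)"
  have C: "0 < C" using nz by (simp add: C_def coord_scale_def prod_pos)
  have T: "scales_measure (lebK bs) (Tmap bs k) C" for k
    unfolding C_def using nz by (rule scales_lebK)
  have fm [measurable]: "f \<in> borel_measurable (lebK bs)" using f by (rule borel_measurable_integrable)
  have "integral\<^sup>L (lebK bs) f = integral\<^sup>L (lebK bs) (Pop bs f)"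
    using f_fix by (intro integral_cong_AE) (auto simp: Pop_def[abs_def])
  also have "\<dots> = D / 2 * (integral\<^sup>L (lebK bs) (\<lambda>x. f (Tmap bs 0 x)) + integral\<^sup>L (lebK bs) (\<lambda>x. f (Tmap bs (-1) x)))"
    using scales_measure_integral(1)[OF T C f] by (simp add: Pop_def[abs_def] D_def)
  also have "\<dots> = D / 2 * (integral\<^sup>L (lebK bs) f / C + integral\<^sup>L (lebK bs) f / C)"
    using scales_measure_integral(2)[OF T C f, of 0] scales_measure_integral(2)[OF T C f, of "-1"] C
    by simp
  also have "\<dots> = (D / C) * integral\<^sup>L (lebK bs) f"
    by (simp add: field_simps)
  finally have "D = C" using f_int C by (simp add: field_simps)
  then show ?thesis using T by (simp add: D_def)
qed

section \<open>The averaging operator\<close>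

lemma nn_integral_add_measures:
  assumes s0: "sets N0 = sets M" and s1: "sets N1 = sets M"
    and eq: "\<And>A. A \<in> sets M \<Longrightarrow> emeasure M A = emeasure N0 A + emeasure N1 A"
    and u: "u \<in> borel_measurable M"
  shows "(\<integral>\<^sup>+x. u x \<partial>M) = (\<integral>\<^sup>+x. u x \<partial>N0) + (\<integral>\<^sup>+x. u x \<partial>N1)"
  using u
proof (induct rule: borel_measurable_induct)
  case (cong f g)
  have "space N0 = space M" "space N1 = space M"
    using sets_eq_imp_space_eq s0 s1 by auto
  then have "integral\<^sup>N N f = integral\<^sup>N N g" if "N \<in> {M, N0, N1}" for N
    using cong(3) that by (auto intro: nn_integral_cong)
  with cong(4) show ?case by simp
next
  case (set A)
  then show ?case using eq[OF set] s0 s1 by simp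
next
  case (mult u c)
  have "u \<in> borel_measurable N0" "u \<in> borel_measurable N1"
    using mult(2) by (simp_all add: measurable_cong_sets[OF s0 refl] measurable_cong_sets[OF s1 refl])
  with mult show ?case by (simp add: nn_integral_cmult distrib_left)
next
  case (add u v)
  have "u \<in> borel_measurable N0" "v \<in> borel_measurable N0" "u \<in> borel_measurable N1" "v \<in> borel_measurable N1"
    using add(1,4) by (simp_all add: measurable_cong_sets[OF s0 refl] measurable_cong_sets[OF s1 refl])
  with add show ?case by (simp add: nn_integral_add ac_simps)
next
  case (seq U)
  have conv: "(\<integral>\<^sup>+x. (SUP i. U i) x \<partial>N) = (SUP i. integral\<^sup>N N (U i))"
    if "\<And>i. U i \<in> borel_measurable N" for N
    unfolding SUP_apply by (rule nn_integral_monotone_convergence_SUP[OF seq(4) that])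
  have inc: "incseq (\<lambda>i. integral\<^sup>N N (U i))" for N
    using seq(4) by (auto simp: incseq_def le_fun_def intro!: nn_integral_mono)
  have m0: "U i \<in> borel_measurable N0" and m1: "U i \<in> borel_measurable N1" for i
    using seq(1) by (simp_all add: measurable_cong_sets[OF s0 refl] measurable_cong_sets[OF s1 refl])
  note conv[OF seq(1)]
  also have "(SUP i. integral\<^sup>N M (U i)) = (SUP i. integral\<^sup>N N0 (U i) + integral\<^sup>N N1 (U i))"
    using seq(3) by simp
  also have "\<dots> = (SUP i. integral\<^sup>N N0 (U i)) + (SUP i. integral\<^sup>N N1 (U i))"
    by (rule ennreal_SUP_add[OF inc inc])
  finally show ?case using conv[OF m0] conv[OF m1] by simp
qed

lemma integral_add_measures:
  fixes g :: "'a \<Rightarrow> real"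
  assumes s0: "sets N0 = sets M" and s1: "sets N1 = sets M"
    and eq: "\<And>A. A \<in> sets M \<Longrightarrow> emeasure M A = emeasure N0 A + emeasure N1 A"
    and g0: "integrable N0 g" and g1: "integrable N1 g"
  shows "integrable M g" and "integral\<^sup>L M g = integral\<^sup>L N0 g + integral\<^sup>L N1 g"
proof -
  have gm: "g \<in> borel_measurable M"
    using borel_measurable_integrable[OF g0] by (simp add: measurable_cong_sets[OF s0 refl])
  have pos: "(\<integral>\<^sup>+x. ennreal (g x) \<partial>M) = (\<integral>\<^sup>+x. ennreal (g x) \<partial>N0) + (\<integral>\<^sup>+x. ennreal (g x) \<partial>N1)"
    and neg: "(\<integral>\<^sup>+x. ennreal (- g x) \<partial>M) = (\<integral>\<^sup>+x. ennreal (- g x) \<partial>N0) + (\<integral>\<^sup>+x. ennreal (- g x) \<partial>N1)"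
    using gm by (intro nn_integral_add_measures[OF s0 s1 eq]; simp)+
  have fin: "(\<integral>\<^sup>+x. ennreal (g x) \<partial>N) \<noteq> \<infinity>" "(\<integral>\<^sup>+x. ennreal (- g x) \<partial>N) \<noteq> \<infinity>"
    if "integrable N g" for N
    using that by (simp_all add: real_integrable_def)
  show "integrable M g"
    using gm pos neg fin[OF g0] fin[OF g1] by (simp add: real_integrable_def)
  then show "integral\<^sup>L M g = integral\<^sup>L N0 g + integral\<^sup>L N1 g"
    using pos neg fin[OF g0] fin[OF g1] g0 g1
    by (simp add: real_lebesgue_integral_def enn2real_plus less_top[symmetric])
qed

lemma integrable_bounded_mult:
  fixes g h :: "'a \<Rightarrow> real"
  assumes h: "integrable M h" and g: "g \<in> borel_measurable M" and B: "\<And>x. \<bar>g x\<bar> \<le> B"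
  shows "integrable M (\<lambda>x. g x * h x)"
proof (rule Bochner_Integration.integrable_bound[OF integrable_mult_right[OF h, of B]])
  show "(\<lambda>x. g x * h x) \<in> borel_measurable M" using g h by measurable
  show "AE x in M. norm (g x * h x) \<le> norm (B * h x)"
  proof (intro AE_I2)
    fix x
    have "\<bar>g x\<bar> * \<bar>h x\<bar> \<le> \<bar>B\<bar> * \<bar>h x\<bar>"
      using order.trans[OF B abs_ge_self] by (rule mult_right_mono) simp
    then show "norm (g x * h x) \<le> norm (B * h x)" by (simp add: abs_mult)
  qed
qed

definition ifs_mean :: "('a \<Rightarrow> 'a) \<Rightarrow> ('a \<Rightarrow> 'a) \<Rightarrow> ('a \<Rightarrow> real) \<Rightarrow> 'a \<Rightarrow> real" where
  "ifs_mean S0 S1 g x = (g (S0 x) + g (S1 x)) / 2"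

lemma ifs_mean_measurable [measurable]:
  assumes [measurable]: "S0 \<in> M \<rightarrow>\<^sub>M M" "S1 \<in> M \<rightarrow>\<^sub>M M" "g \<in> borel_measurable M"
  shows "ifs_mean S0 S1 g \<in> borel_measurable M"
  unfolding ifs_mean_def[abs_def] by measurable

lemma abs_ifs_mean_le:
  assumes "\<And>x. \<bar>g x\<bar> \<le> B"
  shows "\<bar>ifs_mean S0 S1 g x\<bar> \<le> B"
  using assms[of "S0 x"] assms[of "S1 x"] unfolding ifs_mean_def by (simp add: abs_le_iff)

lemma ifs_mean_lipschitz:
  fixes d :: "'a \<Rightarrow> 'a \<Rightarrow> real"
  assumes S0: "\<And>x y. d (S0 x) (S0 y) \<le> \<rho> * d x y" and S1: "\<And>x y. d (S1 x) (S1 y) \<le> \<rho> * d x y"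
    and L: "0 \<le> L" and g: "\<And>x y. \<bar>g x - g y\<bar> \<le> L * d x y"
  shows "\<bar>ifs_mean S0 S1 g x - ifs_mean S0 S1 g y\<bar> \<le> L * \<rho> * d x y"
proof -
  have avg: "\<bar>(a + b) / 2 - (c + e) / 2\<bar> \<le> K" if "\<bar>a - c\<bar> \<le> K" "\<bar>b - e\<bar> \<le> K" for a b c e K :: real
  proof -
    have "\<bar>(a + b) / 2 - (c + e) / 2\<bar> = \<bar>((a - c) + (b - e)) / 2\<bar>"
      by (rule arg_cong[where f=abs]) (simp add: field_simps)
    also have "\<dots> \<le> (\<bar>a - c\<bar> + \<bar>b - e\<bar>) / 2"
      by (simp add: divide_right_mono abs_triangle_ineq)
    finally show ?thesis using that by simp
  qed
  have "\<bar>g (S x) - g (S y)\<bar> \<le> L * \<rho> * d x y" if "\<And>x y. d (S x) (S y) \<le> \<rho> * d x y" for S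
    using order.trans[OF g[of "S x" "S y"] mult_left_mono[OF that L]] by (simp add: mult.assoc)
  from avg[OF this[OF S0] this[OF S1]] show ?thesis
    unfolding ifs_mean_def .
qed

lemma integral_ifs_mean_stationary:
  fixes g :: "'a \<Rightarrow> real"
  assumes "finite_measure \<nu>" and S0 [measurable]: "S0 \<in> \<nu> \<rightarrow>\<^sub>M \<nu>" and S1 [measurable]: "S1 \<in> \<nu> \<rightarrow>\<^sub>M \<nu>"
    and stat: "\<And>A. A \<in> sets \<nu> \<Longrightarrow>
      emeasure \<nu> A = (emeasure \<nu> (S0 -` A \<inter> space \<nu>) + emeasure \<nu> (S1 -` A \<inter> space \<nu>)) / 2"
    and g [measurable]: "g \<in> borel_measurable \<nu>" and B: "\<And>x. \<bar>g x\<bar> \<le> B"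
  shows "(\<integral>x. ifs_mean S0 S1 g x \<partial>\<nu>) = (\<integral>x. g x \<partial>\<nu>)"
proof -
  interpret finite_measure \<nu> by fact
  let ?N = "\<lambda>S. density (distr \<nu> \<nu> S) (\<lambda>_. ennreal (1 / 2))"
  have gS: "integrable \<nu> (\<lambda>x. g (S x))" if [measurable]: "S \<in> \<nu> \<rightarrow>\<^sub>M \<nu>" for S
    using B by (intro integrable_const_bound[where B=B]) auto
  have int: "integrable (?N S) g" and intN: "integral\<^sup>L (?N S) g = (\<integral>x. g (S x) \<partial>\<nu>) / 2"
    if [measurable]: "S \<in> \<nu> \<rightarrow>\<^sub>M \<nu>" for S
    using gS[OF that] by (subst integrable_density integral_density; simp add: integrable_distr_eq integral_distr)+
  have half: "emeasure (?N S) A = ennreal (1 / 2) * emeasure \<nu> (S -` A \<inter> space \<nu>)"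
    if "S \<in> \<nu> \<rightarrow>\<^sub>M \<nu>" "A \<in> sets \<nu>" for S A
    using emeasure_density_distr_const[OF that] .
  have "emeasure \<nu> A = emeasure (?N S0) A + emeasure (?N S1) A" if A: "A \<in> sets \<nu>" for A
    using stat[OF A] half[OF S0 A] half[OF S1 A] by (simp add: divide_ennreal_def algebra_simps)
  then have "(\<integral>x. g x \<partial>\<nu>) = integral\<^sup>L (?N S0) g + integral\<^sup>L (?N S1) g"
    by (intro integral_add_measures(2) int) simp_all
  also have "\<dots> = (\<integral>x. g (S0 x) \<partial>\<nu>) / 2 + (\<integral>x. g (S1 x) \<partial>\<nu>) / 2"
    by (simp only: intN[OF S0] intN[OF S1])
  also have "\<dots> = (\<integral>x. ifs_mean S0 S1 g x \<partial>\<nu>)"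
    using gS[OF S0] gS[OF S1] by (simp add: ifs_mean_def add_divide_distrib)
  finally show ?thesis ..
qed

lemma abs_ifs_mean_iterate_le:
  assumes "\<And>x. \<bar>g x\<bar> \<le> B"
  shows "\<bar>(ifs_mean S0 S1 ^^ n) g x\<bar> \<le> B"
  by (induct n arbitrary: x) (simp_all add: assms abs_ifs_mean_le)

lemma ifs_mean_iterate_lipschitz:
  fixes d :: "'a \<Rightarrow> 'a \<Rightarrow> real"
  assumes S0: "\<And>x y. d (S0 x) (S0 y) \<le> \<rho> * d x y" and S1: "\<And>x y. d (S1 x) (S1 y) \<le> \<rho> * d x y"
    and \<rho>: "0 \<le> \<rho>" and L: "0 \<le> L" and g: "\<And>x y. \<bar>g x - g y\<bar> \<le> L * d x y"
  shows "\<bar>(ifs_mean S0 S1 ^^ n) g x - (ifs_mean S0 S1 ^^ n) g y\<bar> \<le> L * \<rho> ^ n * d x y"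
proof (induct n arbitrary: x y)
  case (Suc n)
  have "0 \<le> L * \<rho> ^ n" using L \<rho> by simp
  from ifs_mean_lipschitz[OF S0 S1 this Suc] show ?case
    by (simp add: mult_ac)
qed (simp add: g)

lemma tendsto_integral_bounded_mult_zero:
  fixes F :: "nat \<Rightarrow> 'a \<Rightarrow> real"
  assumes w: "integrable M w" and F: "\<And>n. F n \<in> borel_measurable M"
    and C: "\<And>n x. \<bar>F n x\<bar> \<le> C" and lim: "\<And>x. (\<lambda>n. F n x) \<longlonglongrightarrow> 0"
  shows "(\<lambda>n. \<integral>x. F n x * w x \<partial>M) \<longlonglongrightarrow> 0"
proof -
  have wm [measurable]: "w \<in> borel_measurable M" using w by (rule borel_measurable_integrable)
  have "(\<lambda>n. \<integral>x. F n x * w x \<partial>M) \<longlonglongrightarrow> (\<integral>x. 0 * w x \<partial>M)"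
  proof (rule integral_dominated_convergence[where w="\<lambda>x. C * \<bar>w x\<bar>"])
    show "(\<lambda>x. F n x * w x) \<in> borel_measurable M" for n using F[of n] by measurable
    show "integrable M (\<lambda>x. C * \<bar>w x\<bar>)" using w by auto
    show "AE x in M. (\<lambda>n. F n x * w x) \<longlonglongrightarrow> 0 * w x"
      using lim by (intro AE_I2 tendsto_mult_right)
    show "AE x in M. norm (F n x * w x) \<le> C * \<bar>w x\<bar>" for n
      using C by (intro AE_I2) (simp add: abs_mult mult_right_mono)
  qed simp
  then show ?thesis by simp
qed

text \<open>The iterates of the averaging operator flatten a Lipschitz function towards a constant,
  which every invariant normalised functional must then assign to it.\<close>

lemma ifs_mean_iterates_tendsto_integral:
  fixes d :: "'a \<Rightarrow> 'a \<Rightarrow> real" and g w :: "'a \<Rightarrow> real"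
  assumes S0m [measurable]: "S0 \<in> M \<rightarrow>\<^sub>M M" and S1m [measurable]: "S1 \<in> M \<rightarrow>\<^sub>M M"
    and S0: "\<And>x y. d (S0 x) (S0 y) \<le> \<rho> * d x y" and S1: "\<And>x y. d (S1 x) (S1 y) \<le> \<rho> * d x y"
    and \<rho>: "0 \<le> \<rho>" "\<rho> < 1"
    and w: "integrable M w" and w1: "(\<integral>x. w x \<partial>M) = 1"
    and inv: "\<And>g B. g \<in> borel_measurable M \<Longrightarrow> (\<And>x. \<bar>g x\<bar> \<le> B) \<Longrightarrow>
      (\<integral>x. ifs_mean S0 S1 g x * w x \<partial>M) = (\<integral>x. g x * w x \<partial>M)"
    and g [measurable]: "g \<in> borel_measurable M" and B: "\<And>x. \<bar>g x\<bar> \<le> B"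
    and L: "0 \<le> L" and g_lip: "\<And>x y. \<bar>g x - g y\<bar> \<le> L * d x y"
  shows "(\<lambda>n. (ifs_mean S0 S1 ^^ n) g x\<^sub>0) \<longlonglongrightarrow> (\<integral>x. g x * w x \<partial>M)"
proof -
  define G where "G n = (ifs_mean S0 S1 ^^ n) g" for n
  have Gm [measurable]: "G n \<in> borel_measurable M" for n
    by (induct n) (simp_all add: G_def)
  have GB: "\<bar>G n x\<bar> \<le> B" for n x
    unfolding G_def using B by (rule abs_ifs_mean_iterate_le)
  have G_lip: "\<bar>G n x - G n y\<bar> \<le> L * \<rho> ^ n * d x y" for n x y
    unfolding G_def using S0 S1 \<rho>(1) L g_lip by (rule ifs_mean_iterate_lipschitz)
  have G_int: "(\<integral>x. G n x * w x \<partial>M) = (\<integral>x. g x * w x \<partial>M)" for n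
    by (induct n) (simp_all add: G_def inv[OF Gm[unfolded G_def] GB[unfolded G_def]])
  have "(\<lambda>n. \<integral>x. (G n x - G n x\<^sub>0) * w x \<partial>M) \<longlonglongrightarrow> 0"
  proof (rule tendsto_integral_bounded_mult_zero[OF w])
    show "\<bar>G n x - G n x\<^sub>0\<bar> \<le> 2 * B" for n x
      using GB[of n x] GB[of n x\<^sub>0] by linarith
    show "(\<lambda>n. G n x - G n x\<^sub>0) \<longlonglongrightarrow> 0" for x
    proof (rule Lim_null_comparison)
      show "\<forall>\<^sub>F n in sequentially. norm (G n x - G n x\<^sub>0) \<le> L * d x x\<^sub>0 * \<rho> ^ n"
        using G_lip[of _ x x\<^sub>0] by (simp add: mult_ac)
      show "(\<lambda>n. L * d x x\<^sub>0 * \<rho> ^ n) \<longlonglongrightarrow> 0"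
        using \<rho> by (intro tendsto_mult_right_zero LIMSEQ_power_zero) auto
    qed
  qed simp
  moreover have "(\<integral>x. (G n x - G n x\<^sub>0) * w x \<partial>M) = (\<integral>x. g x * w x \<partial>M) - G n x\<^sub>0" for n
  proof -
    have "(\<integral>x. (G n x - G n x\<^sub>0) * w x \<partial>M) = (\<integral>x. G n x * w x \<partial>M) - G n x\<^sub>0 * (\<integral>x. w x \<partial>M)"
      using integrable_bounded_mult[OF w Gm GB] w by (simp add: left_diff_distrib)
    then show ?thesis by (simp only: G_int w1 mult_1_right)
  qed
  ultimately have "(\<lambda>n. (\<integral>x. g x * w x \<partial>M) - G n x\<^sub>0) \<longlonglongrightarrow> 0"
    by simp
  then have "(\<lambda>n. (\<integral>x. g x * w x \<partial>M) - ((\<integral>x. g x * w x \<partial>M) - G n x\<^sub>0)) \<longlonglongrightarrow> (\<integral>x. g x * w x \<partial>M) - 0"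
    by (intro tendsto_diff tendsto_const)
  then show ?thesis by (simp add: G_def)
qed

lemma ifs_mean_iterates_tendsto_stationary:
  fixes d :: "'a \<Rightarrow> 'a \<Rightarrow> real" and g :: "'a \<Rightarrow> real"
  assumes \<nu>: "prob_space \<nu>" and S0m: "S0 \<in> \<nu> \<rightarrow>\<^sub>M \<nu>" and S1m: "S1 \<in> \<nu> \<rightarrow>\<^sub>M \<nu>"
    and S0: "\<And>x y. d (S0 x) (S0 y) \<le> \<rho> * d x y" and S1: "\<And>x y. d (S1 x) (S1 y) \<le> \<rho> * d x y"
    and \<rho>: "0 \<le> \<rho>" "\<rho> < 1"
    and stat: "\<And>A. A \<in> sets \<nu> \<Longrightarrow>
      emeasure \<nu> A = (emeasure \<nu> (S0 -` A \<inter> space \<nu>) + emeasure \<nu> (S1 -` A \<inter> space \<nu>)) / 2"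
    and g: "g \<in> borel_measurable \<nu>" and B: "\<And>x. \<bar>g x\<bar> \<le> B"
    and L: "0 \<le> L" and g_lip: "\<And>x y. \<bar>g x - g y\<bar> \<le> L * d x y"
  shows "(\<lambda>n. (ifs_mean S0 S1 ^^ n) g x\<^sub>0) \<longlonglongrightarrow> (\<integral>x. g x \<partial>\<nu>)"
proof -
  interpret prob_space \<nu> by (rule \<nu>)
  have "(\<lambda>n. (ifs_mean S0 S1 ^^ n) g x\<^sub>0) \<longlonglongrightarrow> (\<integral>x. g x * 1 \<partial>\<nu>)"
  proof (rule ifs_mean_iterates_tendsto_integral[OF S0m S1m S0 S1 \<rho> _ _ _ g B L g_lip])
    fix g' :: "'a \<Rightarrow> real" and B'
    assume g': "g' \<in> borel_measurable \<nu>" and B': "\<And>x. \<bar>g' x\<bar> \<le> B'"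
    show "(\<integral>x. ifs_mean S0 S1 g' x * 1 \<partial>\<nu>) = (\<integral>x. g' x * 1 \<partial>\<nu>)"
      using integral_ifs_mean_stationary[OF finite_measure S0m S1m stat g' B'] by simp
  next
    show "integrable \<nu> (\<lambda>x. 1::real)" by simp
  next
    show "(\<integral>x. 1 \<partial>\<nu>) = (1::real)" using prob_space.prob_space[OF \<nu>] by simp
  qed
  then show ?thesis by simp
qed

definition Tmap_inv :: "('d \<Rightarrow> complex) \<Rightarrow> int \<Rightarrow> ('d \<Rightarrow> complex) \<Rightarrow> ('d \<Rightarrow> complex)" where
  "Tmap_inv bs i x = (\<lambda>j. (x j - of_int i) / bs j)"

lemma Tmap_inv_Tmap: "(\<And>j. bs j \<noteq> 0) \<Longrightarrow> Tmap_inv bs i (Tmap bs i x) = x"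
  by (simp add: Tmap_def Tmap_inv_def fun_eq_iff)

lemma image_Tmap_eq_vimage_Tmap_inv:
  assumes "\<And>j. bs j \<noteq> 0"
  shows "Tmap bs i ` A = Tmap_inv bs i -` A"
proof -
  have "Tmap bs i (Tmap_inv bs i x) = x" for x
    using assms by (simp add: Tmap_def Tmap_inv_def fun_eq_iff)
  then have "Tmap_inv bs i -` A \<subseteq> Tmap bs i ` A"
    by (metis image_eqI subsetI vimageD)
  moreover have "Tmap bs i ` A \<subseteq> Tmap_inv bs i -` A"
    using Tmap_inv_Tmap[of bs, OF assms] by auto
  ultimately show ?thesis by blast
qed

lemma Tmap_inv_measurable [measurable]: "Tmap_inv bs i \<in> lebK bs \<rightarrow>\<^sub>M lebK bs"
  unfolding Tmap_inv_def lebK_eq_PiM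
  by (rule measurable_PiM_single'[where f="\<lambda>j x. (x j - of_int i) / bs j"]) (auto simp: space_PiM)

definition l1_dist :: "('i::finite \<Rightarrow> 'a::metric_space) \<Rightarrow> ('i \<Rightarrow> 'a) \<Rightarrow> real" where
  "l1_dist x y = (\<Sum>j\<in>UNIV. dist (x j) (y j))"

lemma Tmap_inv_contraction:
  fixes bs :: "'d::finite \<Rightarrow> complex"
  assumes big: "\<And>j. 1 < cmod (bs j)"
  obtains \<rho> where "0 \<le> \<rho>" "\<rho> < 1" "\<And>i x y. l1_dist (Tmap_inv bs i x) (Tmap_inv bs i y) \<le> \<rho> * l1_dist x y"
proof -
  define \<rho> where "\<rho> = Max (range (\<lambda>j. 1 / cmod (bs j)))"
  have le: "1 / cmod (bs j) \<le> \<rho>" for j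
    unfolding \<rho>_def by (rule Max_ge) auto
  have "\<rho> \<in> range (\<lambda>j. 1 / cmod (bs j))"
    unfolding \<rho>_def by (rule Max_in) auto
  then obtain j\<^sub>0 where j\<^sub>0: "\<rho> = 1 / cmod (bs j\<^sub>0)" by blast
  show ?thesis
  proof (rule that)
    show "0 \<le> \<rho>" "\<rho> < 1" using big[of j\<^sub>0] unfolding j\<^sub>0 by (simp_all add: divide_less_eq)
    fix i x y
    have "dist (Tmap_inv bs i x j) (Tmap_inv bs i y j) \<le> \<rho> * dist (x j) (y j)" for j
    proof -
      have "dist (Tmap_inv bs i x j) (Tmap_inv bs i y j) = 1 / cmod (bs j) * dist (x j) (y j)"
        using big[of j] by (auto simp: Tmap_inv_def dist_norm norm_divide diff_divide_distrib[symmetric])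
      also have "\<dots> \<le> \<rho> * dist (x j) (y j)"
        by (intro mult_right_mono le) simp
      finally show ?thesis .
    qed
    then show "l1_dist (Tmap_inv bs i x) (Tmap_inv bs i y) \<le> \<rho> * l1_dist x y"
      unfolding l1_dist_def sum_distrib_left by (intro sum_mono) auto
  qed
qed

lemma integral_ifs_mean_fixed_point:
  fixes h g :: "('d::finite \<Rightarrow> complex) \<Rightarrow> real"
  assumes nz: "\<And>j. bs j \<noteq> 0"
    and T: "\<And>i. scales_measure (lebK bs) (Tmap bs i) (norm (\<Prod>j\<in>UNIV. bs j))"
    and h: "integrable (lebK bs) h" and h_fix: "AE x in lebK bs. Pop bs h x = h x"
    and g [measurable]: "g \<in> borel_measurable (lebK bs)" and B: "\<And>x. \<bar>g x\<bar> \<le> B"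
  shows "(\<integral>x. ifs_mean (Tmap_inv bs 0) (Tmap_inv bs (-1)) g x * h x \<partial>lebK bs) = (\<integral>x. g x * h x \<partial>lebK bs)"
proof -
  let ?M = "lebK bs" and ?D = "norm (\<Prod>j\<in>UNIV. bs j)"
  have D: "0 < ?D" using nz by simp
  have hm [measurable]: "h \<in> borel_measurable ?M" using h by (rule borel_measurable_integrable)
  have hT: "integrable ?M (\<lambda>x. h (Tmap bs i x))" for i
    by (rule scales_measure_integral(1)[OF T[of i] D h])
  have gS: "integrable ?M (\<lambda>x. g (Tmap_inv bs i x) * h x)" for i
    using B by (intro integrable_bounded_mult[OF h]) auto
  have gT: "integrable ?M (\<lambda>x. g x * h (Tmap bs i x))" for i
    using B by (intro integrable_bounded_mult[OF hT]) auto
  have change: "(\<integral>x. g (Tmap_inv bs i x) * h x \<partial>?M) = ?D * (\<integral>x. g x * h (Tmap bs i x) \<partial>?M)" for i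
    using scales_measure_integral(2)[OF T[of i] D gS[of i]] by (simp add: Tmap_inv_Tmap[of bs, OF nz])
  have "(\<integral>x. ifs_mean (Tmap_inv bs 0) (Tmap_inv bs (-1)) g x * h x \<partial>?M)
      = ((\<integral>x. g (Tmap_inv bs 0 x) * h x \<partial>?M) + (\<integral>x. g (Tmap_inv bs (-1) x) * h x \<partial>?M)) / 2"
    using gS[of 0] gS[of "-1"] by (simp add: ifs_mean_def add_divide_distrib distrib_right)
  also have "\<dots> = ?D / 2 * ((\<integral>x. g x * h (Tmap bs 0 x) \<partial>?M) + (\<integral>x. g x * h (Tmap bs (-1) x) \<partial>?M))"
    unfolding change by (simp add: field_simps)
  also have "\<dots> = (\<integral>x. ?D / 2 * (g x * h (Tmap bs 0 x)) + ?D / 2 * (g x * h (Tmap bs (-1) x)) \<partial>?M)"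
    using gT[of 0] gT[of "-1"] by (simp add: distrib_left)
  also have "\<dots> = (\<integral>x. g x * Pop bs h x \<partial>?M)"
    by (simp add: Pop_def algebra_simps)
  also have "\<dots> = (\<integral>x. g x * h x \<partial>?M)"
    using h_fix by (intro integral_cong_AE) (auto simp: Pop_def[abs_def])
  finally show ?thesis .
qed

lemma integral_eq_stationary_lipschitz:
  fixes bs :: "'d::finite \<Rightarrow> complex" and h g :: "('d \<Rightarrow> complex) \<Rightarrow> real"
  assumes big: "\<And>j. 1 < cmod (bs j)"
    and T: "\<And>i. scales_measure (lebK bs) (Tmap bs i) (norm (\<Prod>j\<in>UNIV. bs j))"
    and h: "integrable (lebK bs) h" and h1: "(\<integral>x. h x \<partial>lebK bs) = 1"
    and h_fix: "AE x in lebK bs. Pop bs h x = h x"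
    and nu: "prob_space \<nu>" and nu_sets: "sets \<nu> = sets (lebK bs)"
    and nu_selfaffine: "\<And>A. A \<in> sets \<nu> \<Longrightarrow>
      emeasure \<nu> A = (emeasure \<nu> (Tmap bs 0 ` A) + emeasure \<nu> (Tmap bs (-1) ` A)) / 2"
    and g: "g \<in> borel_measurable (lebK bs)" and B: "\<And>x. \<bar>g x\<bar> \<le> B"
    and L: "0 \<le> L" and g_lip: "\<And>x y. \<bar>g x - g y\<bar> \<le> L * l1_dist x y"
  shows "(\<integral>x. g x * h x \<partial>lebK bs) = (\<integral>x. g x \<partial>\<nu>)"
proof -
  have nz: "bs j \<noteq> 0" for j using big[of j] by auto
  obtain \<rho> where \<rho>: "0 \<le> \<rho>" "\<rho> < 1"
    and contr: "\<And>i x y. l1_dist (Tmap_inv bs i x) (Tmap_inv bs i y) \<le> \<rho> * l1_dist x y"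
    using Tmap_inv_contraction[of bs, OF big] by blast
  let ?G = "\<lambda>n. (ifs_mean (Tmap_inv bs 0) (Tmap_inv bs (-1)) ^^ n) g (\<lambda>_. 0)"
  have space_nu: "space \<nu> = UNIV" using sets_eq_imp_space_eq[OF nu_sets] by simp
  have Tmap_inv_nu: "Tmap_inv bs i \<in> \<nu> \<rightarrow>\<^sub>M \<nu>" for i
    using Tmap_inv_measurable[of bs i] unfolding measurable_cong_sets[OF nu_sets nu_sets] .
  have "?G \<longlonglongrightarrow> (\<integral>x. g x * h x \<partial>lebK bs)"
  proof (rule ifs_mean_iterates_tendsto_integral[where d=l1_dist, OF Tmap_inv_measurable[of bs 0] Tmap_inv_measurable[of bs "-1"]
        contr[of 0] contr[of "-1"] \<rho> h h1 _ g B L g_lip])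
    fix g' :: "('d \<Rightarrow> complex) \<Rightarrow> real" and B'
    assume "g' \<in> borel_measurable (lebK bs)" "\<And>x. \<bar>g' x\<bar> \<le> B'"
    then show "(\<integral>x. ifs_mean (Tmap_inv bs 0) (Tmap_inv bs (-1)) g' x * h x \<partial>lebK bs) = (\<integral>x. g' x * h x \<partial>lebK bs)"
      by (rule integral_ifs_mean_fixed_point[of bs, OF nz T h h_fix])
  qed
  moreover have "?G \<longlonglongrightarrow> (\<integral>x. g x \<partial>\<nu>)"
  proof (rule ifs_mean_iterates_tendsto_stationary[where d=l1_dist, OF nu Tmap_inv_nu[of 0] Tmap_inv_nu[of "-1"] contr[of 0] contr[of "-1"] \<rho> _ _ B L g_lip])
    show "g \<in> borel_measurable \<nu>"
      using g unfolding measurable_cong_sets[OF nu_sets refl] .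
    fix A assume "A \<in> sets \<nu>"
    then show "emeasure \<nu> A = (emeasure \<nu> (Tmap_inv bs 0 -` A \<inter> space \<nu>) + emeasure \<nu> (Tmap_inv bs (-1) -` A \<inter> space \<nu>)) / 2"
      using nu_selfaffine by (simp only: space_nu Int_UNIV_right image_Tmap_eq_vimage_Tmap_inv[of bs, OF nz])
  qed
  ultimately show ?thesis by (rule LIMSEQ_unique)
qed

section \<open>From Lipschitz functions to Borel sets\<close>

text \<open>The special case \<open>V = UNIV\<close> is needed since the distance to the empty set is \<open>0\<close>.\<close>

definition cutoff :: "nat \<Rightarrow> 'a::metric_space set \<Rightarrow> 'a \<Rightarrow> real" where
  "cutoff k V z = (if V = UNIV then 1 else min 1 (real k * infdist z (- V)))"

lemma cutoff_bounds: "0 \<le> cutoff k V z" "cutoff k V z \<le> 1"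
  by (auto simp: cutoff_def infdist_nonneg)

lemma cutoff_lipschitz: "\<bar>cutoff k V z - cutoff k V w\<bar> \<le> real k * dist z w"
proof (cases "V = UNIV")
  case False
  have "\<bar>cutoff k V z - cutoff k V w\<bar> \<le> \<bar>real k * infdist z (- V) - real k * infdist w (- V)\<bar>"
    using False by (simp add: cutoff_def min_def abs_if)
  also have "\<dots> = real k * \<bar>infdist z (- V) - infdist w (- V)\<bar>"
    by (simp add: abs_mult right_diff_distrib[symmetric])
  also have "\<dots> \<le> real k * dist z w"
    by (intro mult_left_mono infdist_triangle_abs) auto
  finally show ?thesis .
qed (simp add: cutoff_def)

lemma borel_measurable_cutoff [measurable]: "cutoff k V \<in> borel_measurable borel"
proof (cases "V = UNIV")
  case False
  have "continuous_on UNIV (\<lambda>z. min 1 (real k * infdist z (- V)))"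
    by (intro continuous_intros)
  then show ?thesis
    using False unfolding cutoff_def[abs_def] by (simp add: borel_measurable_continuous_onI)
qed (simp add: cutoff_def[abs_def])

lemma cutoff_tendsto_indicator:
  assumes V: "open V"
  shows "(\<lambda>k. cutoff k V z) \<longlonglongrightarrow> indicator V z"
proof (cases "z \<in> V")
  case False
  then have "cutoff k V z = 0" for k
    by (auto simp: cutoff_def)
  then show ?thesis using False by simp
next
  case z: True
  show ?thesis
  proof (cases "V = UNIV")
    case False
    then have d: "0 < infdist z (- V)"
      using V z by (intro infdist_pos_not_in_closed) auto
    obtain N :: nat where N: "1 < real N * infdist z (- V)"
      using ex_less_of_nat_mult[OF d, of 1] by auto
    have "cutoff k V z = 1" if "N \<le> k" for k
    proof -
      have "real N * infdist z (- V) \<le> real k * infdist z (- V)"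
        using d that by (intro mult_right_mono) auto
      then show ?thesis using N False by (simp add: cutoff_def)
    qed
    then have "eventually (\<lambda>k. cutoff k V z = 1) sequentially"
      by (rule eventually_sequentiallyI)
    then show ?thesis using z by (simp add: tendsto_eventually)
  qed (simp add: cutoff_def)
qed

definition box_cutoff :: "nat \<Rightarrow> ('i::finite \<Rightarrow> 'a::metric_space set) \<Rightarrow> ('i \<Rightarrow> 'a) \<Rightarrow> real" where
  "box_cutoff k U x = (\<Prod>j\<in>UNIV. cutoff k (U j) (x j))"

lemma abs_box_cutoff_le: "\<bar>box_cutoff k U x\<bar> \<le> 1"
  unfolding box_cutoff_def by (simp add: abs_prod prod_le_1 cutoff_bounds)

lemma box_cutoff_lipschitz: "\<bar>box_cutoff k U x - box_cutoff k U y\<bar> \<le> real k * l1_dist x y"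
proof -
  have "\<bar>box_cutoff k U x - box_cutoff k U y\<bar> \<le> (\<Sum>j\<in>UNIV. \<bar>cutoff k (U j) (x j) - cutoff k (U j) (y j)\<bar>)"
    unfolding box_cutoff_def
    using norm_prod_diff[of UNIV "\<lambda>j. cutoff k (U j) (x j)" "\<lambda>j. cutoff k (U j) (y j)"]
    by (simp add: cutoff_bounds abs_le_iff)
  also have "\<dots> \<le> (\<Sum>j\<in>UNIV. real k * dist (x j) (y j))"
    by (intro sum_mono cutoff_lipschitz)
  finally show ?thesis by (simp add: l1_dist_def sum_distrib_left)
qed

lemma borel_measurable_box_cutoff: "box_cutoff k U \<in> borel_measurable (PiM UNIV (\<lambda>_. borel))"
  unfolding box_cutoff_def[abs_def] by measurable

lemma box_cutoff_tendsto_indicator: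
  assumes "\<And>j. open (U j)"
  shows "(\<lambda>k. box_cutoff k U x) \<longlonglongrightarrow> indicator (PiE UNIV U) x"
proof -
  have "(\<lambda>k. box_cutoff k U x) \<longlonglongrightarrow> (\<Prod>j\<in>UNIV. indicator (U j) (x j))"
    unfolding box_cutoff_def by (intro tendsto_prod cutoff_tendsto_indicator assms)
  moreover have "(\<Prod>j\<in>UNIV. indicator (U j) (x j) :: real) = indicator (PiE UNIV U) x"
    by (auto simp: indicator_def PiE_iff)
  ultimately show ?thesis by simp
qed

lemma sets_PiM_borel_open_boxes:
  "sets (PiM UNIV (\<lambda>_::'i::finite. borel :: 'a::topological_space measure))
     = sigma_sets UNIV {PiE UNIV U | U. \<forall>j. open (U j)}"
proof -
  let ?P' = "{{f \<in> PiE UNIV (\<lambda>_::'i. UNIV :: 'a set). \<forall>i\<in>j. f i \<in> A i} | A j. j \<in> {UNIV} \<and> A \<in> Pi j (\<lambda>_. Collect open)}"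
  have "sets (PiM UNIV (\<lambda>_::'i. borel :: 'a measure)) = sets (sigma (PiE UNIV (\<lambda>_::'i. UNIV :: 'a set)) ?P')"
    unfolding borel_def by (rule sets_PiM_sigma) (auto intro: exI[of _ "{UNIV}"])
  also have "?P' = {PiE UNIV U | U. \<forall>j. open (U j)}"
    by (auto simp: PiE_iff Pi_iff)
  finally show ?thesis by (simp add: sets_measure_of)
qed

lemma Int_stable_open_boxes:
  "Int_stable {PiE UNIV U | U :: 'i \<Rightarrow> 'a::topological_space set. \<forall>j. open (U j)}"
proof (rule Int_stableI)
  fix a b assume "a \<in> {PiE UNIV U | U :: 'i \<Rightarrow> 'a set. \<forall>j. open (U j)}"
    "b \<in> {PiE UNIV U | U :: 'i \<Rightarrow> 'a set. \<forall>j. open (U j)}"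
  then obtain U V where "\<forall>j. open (U j)" "\<forall>j. open (V j)" "a = PiE UNIV U" "b = PiE UNIV V"
    by auto
  then have "a \<inter> b = PiE UNIV (\<lambda>j. U j \<inter> V j) \<and> (\<forall>j. open (U j \<inter> V j))"
    by (auto simp: PiE_iff)
  then show "a \<inter> b \<in> {PiE UNIV U | U :: 'i \<Rightarrow> 'a set. \<forall>j. open (U j)}"
    by blast
qed

lemma integral_indicator_open_box_eq:
  fixes M \<nu> :: "('i::finite \<Rightarrow> 'a::metric_space) measure" and h :: "('i \<Rightarrow> 'a) \<Rightarrow> real"
  assumes M: "sets M = sets (PiM UNIV (\<lambda>_. borel))"
    and \<nu>: "finite_measure \<nu>" and \<nu>_sets: "sets \<nu> = sets M" and h: "integrable M h"
    and lip: "\<And>g B L. g \<in> borel_measurable M \<Longrightarrow> (\<And>x. \<bar>g x\<bar> \<le> B) \<Longrightarrow> 0 \<le> L \<Longrightarrow>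
      (\<And>x y. \<bar>g x - g y\<bar> \<le> L * l1_dist x y) \<Longrightarrow> (\<integral>x. g x * h x \<partial>M) = (\<integral>x. g x \<partial>\<nu>)"
    and U: "\<And>j. open (U j)"
  shows "(\<integral>x. indicator (PiE UNIV U) x * h x \<partial>M) = measure \<nu> (PiE UNIV U)"
proof -
  interpret finite_measure \<nu> by (rule \<nu>)
  let ?G = "\<lambda>k. box_cutoff k U"
  have Gm: "?G k \<in> borel_measurable M" for k
    unfolding measurable_cong_sets[OF M refl] by (rule borel_measurable_box_cutoff)
  have G_int: "(\<integral>x. ?G k x * h x \<partial>M) = (\<integral>x. ?G k x \<partial>\<nu>)" for k
    by (rule lip[of "?G k" 1 "real k"]) (simp_all add: Gm abs_box_cutoff_le box_cutoff_lipschitz)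
  have box: "PiE UNIV U \<in> sets M"
    unfolding M using U by (intro sets_PiM_I_finite) auto
  have hm [measurable]: "h \<in> borel_measurable M" using h by (rule borel_measurable_integrable)
  have "(\<lambda>k. \<integral>x. ?G k x * h x \<partial>M) \<longlonglongrightarrow> (\<integral>x. indicator (PiE UNIV U) x * h x \<partial>M)"
  proof (rule integral_dominated_convergence[where w="\<lambda>x. \<bar>h x\<bar>"])
    show "(\<lambda>x. indicator (PiE UNIV U) x * h x) \<in> borel_measurable M" using box by measurable
    show "(\<lambda>x. ?G k x * h x) \<in> borel_measurable M" for k using Gm[of k] by measurable
    show "integrable M (\<lambda>x. \<bar>h x\<bar>)" using h by auto
    show "AE x in M. (\<lambda>k. ?G k x * h x) \<longlonglongrightarrow> indicator (PiE UNIV U) x * h x"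
      using box_cutoff_tendsto_indicator[OF U] by (intro AE_I2 tendsto_mult_right)
    show "AE x in M. norm (?G k x * h x) \<le> \<bar>h x\<bar>" for k
      using abs_box_cutoff_le[of k U] by (intro AE_I2) (simp add: abs_mult mult_left_le_one_le)
  qed
  moreover have "(\<lambda>k. \<integral>x. ?G k x \<partial>\<nu>) \<longlonglongrightarrow> (\<integral>x. indicator (PiE UNIV U) x \<partial>\<nu>)"
  proof (rule integral_dominated_convergence[where w="\<lambda>x. 1"])
    show "(\<lambda>x. indicator (PiE UNIV U) x :: real) \<in> borel_measurable \<nu>"
      using box \<nu>_sets by (simp add: borel_measurable_indicator)
    show "?G k \<in> borel_measurable \<nu>" for k
      using Gm[of k] unfolding measurable_cong_sets[OF \<nu>_sets refl] .
    show "AE x in \<nu>. (\<lambda>k. ?G k x) \<longlonglongrightarrow> indicator (PiE UNIV U) x"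
      using box_cutoff_tendsto_indicator[OF U] by (intro AE_I2)
    show "AE x in \<nu>. norm (?G k x) \<le> 1" for k
      using abs_box_cutoff_le by (intro AE_I2) simp
  qed simp
  ultimately show ?thesis
    using G_int box \<nu>_sets by (simp add: LIMSEQ_unique)
qed

lemma integral_indicator_eq_measure_sigma_sets:
  fixes h :: "'a \<Rightarrow> real"
  assumes M: "sets M = sigma_sets (space M) G" and G: "Int_stable G" "G \<subseteq> Pow (space M)"
    and \<nu>: "prob_space \<nu>" and \<nu>_sets: "sets \<nu> = sets M"
    and h: "integrable M h" and h1: "(\<integral>x. h x \<partial>M) = 1"
    and eq: "\<And>A. A \<in> G \<Longrightarrow> (\<integral>x. indicator A x * h x \<partial>M) = measure \<nu> A"
    and A: "A \<in> sets M"
  shows "(\<integral>x. indicator A x * h x \<partial>M) = measure \<nu> A"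
proof -
  interpret prob_space \<nu> by (rule \<nu>)
  have space_\<nu>: "space \<nu> = space M" using sets_eq_imp_space_eq[OF \<nu>_sets] .
  have int: "integrable M (\<lambda>x. indicator B x * h x)" if "B \<in> sets M" for B
    using integrable_mult_indicator[OF that h] by simp
  from G A[unfolded M] show ?thesis
  proof (induct rule: sigma_sets_induct_disjoint)
    case (basic A)
    then show ?case by (rule eq)
  next
    case empty
    then show ?case by simp
  next
    case (compl A)
    have A: "A \<in> sets M" using compl(1) M by simp
    have "(\<integral>x. indicator (space M - A) x * h x \<partial>M) = (\<integral>x. h x - indicator A x * h x \<partial>M)"
      by (rule Bochner_Integration.integral_cong) (auto split: split_indicator)
    also have "\<dots> = 1 - measure \<nu> A" using h int[OF A] h1 compl(2) by simp
    also have "\<dots> = measure \<nu> (space M - A)"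
      using prob_compl[of A] A \<nu>_sets space_\<nu> by simp
    finally show ?case .
  next
    case (union A)
    have A: "A i \<in> sets M" for i using union(2) M by auto
    have "(\<integral>x. indicator (\<Union>i. A i) x * h x \<partial>M) = (\<Sum>i. \<integral>x. indicator (A i) x * h x \<partial>M)"
      using lebesgue_integral_countable_add[of A M h] A union(1) integrable_mult_indicator[of "\<Union>i. A i" M h] h
      by (auto simp: set_lebesgue_integral_def set_integrable_def disjoint_family_on_def)
    also have "\<dots> = measure \<nu> (\<Union>i. A i)"
    proof -
      have "(\<lambda>i. measure \<nu> (A i)) sums measure \<nu> (\<Union>i. A i)"
        using A union(1) \<nu>_sets by (intro finite_measure_UNION) auto
      then show ?thesis using union(3) by (simp add: sums_iff)
    qed
    finally show ?case .
  qed
qed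

lemma integral_indicator_eq_measure_imp_density:
  fixes h :: "'a \<Rightarrow> real"
  assumes \<nu>: "finite_measure \<nu>" and \<nu>_sets: "sets \<nu> = sets M" and h: "integrable M h"
    and eq: "\<And>A. A \<in> sets M \<Longrightarrow> (\<integral>x. indicator A x * h x \<partial>M) = measure \<nu> A"
  shows "AE x in M. 0 \<le> h x" and "\<nu> = density M (\<lambda>x. ennreal (h x))"
proof -
  interpret finite_measure \<nu> by (rule \<nu>)
  have hm [measurable]: "h \<in> borel_measurable M" using h by (rule borel_measurable_integrable)
  have int: "integrable M (\<lambda>x. indicator A x * h x)" if "A \<in> sets M" for A
    using integrable_mult_indicator[OF that h] by simp
  define N where "N = {x \<in> space M. h x < 0}"
  have N: "N \<in> sets M" unfolding N_def by measurable
  have N_nonneg: "AE x in M. 0 \<le> - (indicator N x * h x)"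
    by (intro AE_I2) (auto simp: N_def split: split_indicator)
  have "(\<integral>x. - (indicator N x * h x) \<partial>M) = - measure \<nu> N"
    using eq[OF N] by simp
  then have "(\<integral>x. - (indicator N x * h x) \<partial>M) = 0"
    using integral_nonneg_AE[OF N_nonneg] measure_nonneg[of \<nu> N] by linarith
  then have "AE x in M. - (indicator N x * h x) = 0"
    using integral_nonneg_eq_0_iff_AE[OF _ N_nonneg] int[OF N] by simp
  with AE_space show nonneg: "AE x in M. 0 \<le> h x"
  proof eventually_elim
    case (elim x)
    then show ?case by (cases "x \<in> N") (auto simp: N_def)
  qed
  show "\<nu> = density M (\<lambda>x. ennreal (h x))"
  proof (rule measure_eqI)
    show "sets \<nu> = sets (density M (\<lambda>x. ennreal (h x)))" using \<nu>_sets by simp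
    fix A assume "A \<in> sets \<nu>"
    then have A: "A \<in> sets M" using \<nu>_sets by simp
    have "emeasure (density M (\<lambda>x. ennreal (h x))) A = (\<integral>\<^sup>+x. ennreal (h x) * indicator A x \<partial>M)"
      by (rule emeasure_density) (simp_all add: A)
    also have "\<dots> = (\<integral>\<^sup>+x. ennreal (indicator A x * h x) \<partial>M)"
      by (rule nn_integral_cong) (simp split: split_indicator)
    also have "\<dots> = ennreal (\<integral>x. indicator A x * h x \<partial>M)"
      using nonneg by (intro nn_integral_eq_integral int[OF A]) (auto split: split_indicator)
    finally show "emeasure \<nu> A = emeasure (density M (\<lambda>x. ennreal (h x))) A"
      using eq[OF A] A \<nu>_sets by (simp add: emeasure_eq_measure)
  qed
qed

lemma density_eq_if_lipschitz_integrals_eq: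
  fixes M \<nu> :: "('i::finite \<Rightarrow> 'a::metric_space) measure" and h :: "('i \<Rightarrow> 'a) \<Rightarrow> real"
  assumes M: "sets M = sets (PiM UNIV (\<lambda>_. borel))"
    and \<nu>: "prob_space \<nu>" and \<nu>_sets: "sets \<nu> = sets M"
    and h: "integrable M h" and h1: "(\<integral>x. h x \<partial>M) = 1"
    and lip: "\<And>g B L. g \<in> borel_measurable M \<Longrightarrow> (\<And>x. \<bar>g x\<bar> \<le> B) \<Longrightarrow> 0 \<le> L \<Longrightarrow>
      (\<And>x y. \<bar>g x - g y\<bar> \<le> L * l1_dist x y) \<Longrightarrow> (\<integral>x. g x * h x \<partial>M) = (\<integral>x. g x \<partial>\<nu>)"
  shows "AE x in M. 0 \<le> h x" and "\<nu> = density M (\<lambda>x. ennreal (h x))"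
proof -
  let ?G = "{PiE UNIV U | U :: 'i \<Rightarrow> 'a set. \<forall>j. open (U j)}"
  have space: "space M = UNIV"
    using sets_eq_imp_space_eq[OF M] by (simp add: space_PiM)
  then have sigma: "sets M = sigma_sets (space M) ?G"
    by (simp add: M sets_PiM_borel_open_boxes)
  have "(\<integral>x. indicator A x * h x \<partial>M) = measure \<nu> A" if "A \<in> sets M" for A
  proof (rule integral_indicator_eq_measure_sigma_sets[OF sigma Int_stable_open_boxes _ \<nu> \<nu>_sets h h1 _ that])
    fix B assume "B \<in> ?G"
    then obtain U where U: "\<And>j. open (U j)" and B: "B = PiE UNIV U" by auto
    show "(\<integral>x. indicator B x * h x \<partial>M) = measure \<nu> B"
      unfolding B by (rule integral_indicator_open_box_eq[OF M prob_space.finite_measure[OF \<nu>] \<nu>_sets h _ U]) (rule lip)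
  qed (simp add: space)
  then show "AE x in M. 0 \<le> h x" and "\<nu> = density M (\<lambda>x. ennreal (h x))"
    using integral_indicator_eq_measure_imp_density[OF prob_space.finite_measure[OF \<nu>] \<nu>_sets h] by blast+
qed

theorem proposition2p1:
  fixes b :: real and p :: "int poly" and bs :: "'d::finite \<Rightarrow> complex" and c :: complex
    and \<nu> :: "('d \<Rightarrow> complex) measure" and f :: "('d \<Rightarrow> complex) \<Rightarrow> real"
  assumes b_range: "1 < b" "b < 2"
    and p_monic: "lead_coeff p = 1"
    and p_irred: "irreducible p"
    and p_root: "poly (map_poly of_int p) (complex_of_real b) = 0"
    and no_unit_conj: "\<And>z::complex. poly (map_poly of_int p) z = 0 \<Longrightarrow> norm z \<noteq> 1"
    and c_root: "poly (map_poly of_int p) c = 0" and c_real: "c \<in> \<real>" and c_big: "norm c > 1"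
    and c_ne: "c \<noteq> complex_of_real b"
    and bs_inj: "inj bs"
    and bs_range: "range bs = {z. poly (map_poly of_int p) z = 0 \<and> norm z > 1} - {c}"
    and nu_prob: "prob_space \<nu>"
    and nu_sets: "sets \<nu> = sets (lebK bs)"
    and nu_K: "emeasure \<nu> (Kset bs) = 1"
    and nu_selfaffine: "\<And>A. A \<in> sets \<nu> \<Longrightarrow>
          emeasure \<nu> A = (emeasure \<nu> (Tmap bs 0 ` A) + emeasure \<nu> (Tmap bs (-1) ` A)) / 2"
    and f_int: "integrable (lebK bs) f"
    and f_pos: "(\<integral>x. f x \<partial>lebK bs) > 0"
    and f_fix: "\<And>x. x \<in> Kset bs \<Longrightarrow> Pop bs f x = f x"
  shows "absolutely_continuous (lebK bs) \<nu>
       \<and> (AE x in lebK bs. f x / (\<integral>y. f y \<partial>lebK bs) \<ge> 0)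
       \<and> \<nu> = density (lebK bs) (\<lambda>x. ennreal (f x / (\<integral>y. f y \<partial>lebK bs)))"
proof -
  define h where "h x = f x / (\<integral>y. f y \<partial>lebK bs)" for x
  have big: "1 < cmod (bs j)" for j
    using bs_range rangeI[of bs j] by auto
  have nz: "bs j \<noteq> 0" for j using big[of j] by auto
  have f_fix_AE: "AE x in lebK bs. Pop bs f x = f x"
    using AE_Kset by eventually_elim (rule f_fix)
  have T: "scales_measure (lebK bs) (Tmap bs i) (norm (\<Prod>j\<in>UNIV. bs j))" for i
    using f_pos by (intro scales_lebK_fixed_point[of bs, OF nz f_int _ f_fix_AE]) simp
  have h: "integrable (lebK bs) h" and h1: "(\<integral>x. h x \<partial>lebK bs) = 1"
    using f_int f_pos by (simp_all add: h_def[abs_def])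
  have h_fix: "AE x in lebK bs. Pop bs h x = h x"
    using f_fix_AE by eventually_elim (simp add: Pop_def h_def add_divide_distrib[symmetric])
  note lip = integral_eq_stationary_lipschitz[of bs, OF big T h h1 h_fix nu_prob nu_sets nu_selfaffine]
  have nonneg: "AE x in lebK bs. 0 \<le> h x"
    by (rule density_eq_if_lipschitz_integrals_eq(1)[OF sets_lebK nu_prob nu_sets h h1]) (rule lip)
  have density: "\<nu> = density (lebK bs) (\<lambda>x. ennreal (h x))"
    by (rule density_eq_if_lipschitz_integrals_eq(2)[OF sets_lebK nu_prob nu_sets h h1]) (rule lip)
  have "absolutely_continuous (lebK bs) \<nu>"
    unfolding density using h by (intro absolutely_continuousI_density) auto
  with nonneg density show ?thesis
    unfolding h_def[symmetric] by blast
qed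

end
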